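(* Let $(Z,S)$ be a random pair with joint distribution $\mathcal P$, where $Z$ takes values in a measurable space $\mathcal Z$ and $S$ takes values in $\mathcal S=\{0,1\}$. Assume $\pi_s:=\Pr(S=s)>0$ for $s=0,1$. Fix a classifier $f$ and measurable functions $\ell(f,\cdot,\cdot),\ \mu(f,\cdot,\cdot):\mathcal Z\times\mathcal S\to\{0,1\}$; in particular $\ell(f,Z,S)$ and $\mu(f,Z,S)$ have finite variance. Fix $\lambda\in[0,1]$ and a fairness penalty $\phi:\mathbb R^2\to\mathbb R_{\ge 0}$. For $s\in\{0,1\}$ define the population quantities $L_{\mathcal P,s}(f)=\mathbb E[\ell(f,Z,S)\mid S=s]$, $(\sigma^\ell_s)^2=\mathbb V[\ell(f,Z,S)\mid S=s]$, $M_{\mathcal P,s}(f)=\mathbb E[\mu(f,Z,S)\mid S=s]$, $(\sigma^\mu_s)^2=\mathbb V[\mu(f,Z,S)\mid S=s]$, and $c_s=\operatorname{Cov}[\ell(f,Z,S),\mu(f,Z,S)\mid S=s]$. Assume $\phi$ is differentiable at $(M_{\mathcal P,0}(f),M_{\mathcal P,1}(f))$ and write $(k_0,k_1)^T=\nabla\phi\big(M_{\mathcal P,0}(f),M_{\mathcal P,1}(f)\big)$. The population risk is $$L_{\mathcal P}(f)=\lambda\,\mathbb E[\ell(f,Z,S)]+(1-\lambda)\,\phi\big(M_{\mathcal P,0}(f),M_{\mathcal P,1}(f)\big).$$ Let $\mathcal D=\{(Z_j,S_j)\}_{j=1}^m$ be i.i.d. samples from $\mathcal P$, let $m_s=|\{j:S_j=s\}|$,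 and define $l^{(m)}(\mathcal D)=\frac1m\sum_{j=1}^m\ell(f,Z_j,S_j)$, $l^{(m_s)}_s(\mathcal D)=\frac1{m_s}\sum_{j:S_j=s}\mu(f,Z_j,S_j)$ (set to $0$, say, when $m_s=0$), and the sample risk $$L_{\mathcal D}(f)=\lambda\, l^{(m)}(\mathcal D)+(1-\lambda)\,\phi\big(l^{(m_0)}_0(\mathcal D),\,l^{(m_1)}_1(\mathcal D)\big).$$ Then, as $m\to\infty$, $$\sqrt m\,\big[L_{\mathcal D}(f)-L_{\mathcal P}(f)\big]\ \xrightarrow{d}\ N\big(0,\mathbb V_{\lim}(f)\big),$$ where $$\mathbb V_{\lim}(f)=\lambda^2\sum_{s\in\{0,1\}}\pi_s(\sigma^\ell_s)^2+\lambda^2\,\pi_0\pi_1\big(L_{\mathcal P,0}(f)-L_{\mathcal P,1}(f)\big)^2+(1-\lambda)^2\sum_{s\in\{0,1\}}k_s^2\,\frac{(\sigma^\mu_s)^2}{\pi_s}+2\lambda(1-\lambda)\sum_{s\in\{0,1\}}k_s\,c_s .$$ (The second term is the paper's $\lambda^2\sum_{s\neq s'}\pi_s\pi_{s'}(L_{\mathcal P,s}-L_{\mathcal P,s'})^2$ with the sum taken over unordered pairs $\{s,s'\}$.)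
   Context: Here $\ell$ plays the role of a performance loss indicator (e.g. misclassification $\mathbf 1\{\hat Y\neq Y\}$) and $\mu$ the indicator entering a group fairness criterion (e.g. $\mathbf 1\{\hat Y=1\}$ for demographic parity), with $\phi$ measuring discrepancy between the two group-wise means (e.g. $\phi(x,y)=|x-y|$ away from the diagonal). $\mathbb V[\cdot\mid S=s]$ and $\operatorname{Cov}[\cdot,\cdot\mid S=s]$ denote conditional variance and covariance given $S=s$. Convergence is in distribution. *)

theory Defs
  imports "HOL-Probability.Probability"
begin

definition grp_prob :: "('z \<times> nat) measure \<Rightarrow> nat \<Rightarrow> real" where
  "grp_prob P s = measure P {x \<in> space P. snd x = s}"

definition cond_mean :: "('z \<times> nat) measure \<Rightarrow> ('z \<times> nat \<Rightarrow> real) \<Rightarrow> nat \<Rightarrow> real" where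
  "cond_mean P g s =
     (\<integral>x. g x * indicator {y \<in> space P. snd y = s} x \<partial>P) / grp_prob P s"

definition cond_var :: "('z \<times> nat) measure \<Rightarrow> ('z \<times> nat \<Rightarrow> real) \<Rightarrow> nat \<Rightarrow> real" where
  "cond_var P g s = cond_mean P (\<lambda>x. (g x - cond_mean P g s)\<^sup>2) s"

definition cond_cov :: "('z \<times> nat) measure \<Rightarrow> ('z \<times> nat \<Rightarrow> real) \<Rightarrow> ('z \<times> nat \<Rightarrow> real) \<Rightarrow> nat \<Rightarrow> real" where
  "cond_cov P g h s = cond_mean P (\<lambda>x. (g x - cond_mean P g s) * (h x - cond_mean P h s)) s"

definition normal0 :: "real \<Rightarrow> real measure" where
  "normal0 v = (if v = 0 then return borel 0 else density lborel (normal_density 0 (sqrt v)))"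

definition grp_count :: "nat \<Rightarrow> (nat \<Rightarrow> 'z \<times> nat) \<Rightarrow> nat \<Rightarrow> nat" where
  "grp_count m D s = card {j. j < m \<and> snd (D j) = s}"

definition samp_mean :: "nat \<Rightarrow> ('z \<times> nat \<Rightarrow> real) \<Rightarrow> (nat \<Rightarrow> 'z \<times> nat) \<Rightarrow> real" where
  "samp_mean m g D = (\<Sum>j<m. g (D j)) / real m"

definition samp_grp_mean :: "nat \<Rightarrow> ('z \<times> nat \<Rightarrow> real) \<Rightarrow> (nat \<Rightarrow> 'z \<times> nat) \<Rightarrow> nat \<Rightarrow> real" where
  "samp_grp_mean m g D s =
     (if grp_count m D s = 0 then 0
      else (\<Sum>j\<in>{j. j < m \<and> snd (D j) = s}. g (D j)) / real (grp_count m D s))"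

end

theory Submission
  imports Defs
begin

(* The delta method. With M_s the group means of mu, linearizing phi at (M_0, M_1) writes
   sqrt m (L_D - L_P) as m^(-1/2) times a sum of i.i.d. copies of the influence function
   W = lam (ell - E ell) + (1 - lam) (k_0 [S = 0] (mu - M_0) / pi_0 + k_1 [S = 1] (mu - M_1) / pi_1),
   plus (1 - lam) times a remainder. The central limit theorem applies to the first term, and
   E W^2 = V_lim(f) is a finite computation over the eight cells of (ell, mu, S). The remainder
   tends to 0 in probability because, by Chebyshev, the group counts are close to m pi_s and the
   centred group sums are O(sqrt m); Slutsky's lemma combines the two. *)

section \<open>Convergence in probability and the central limit theorem\<close>

context prob_space
begin

definition tendsto_zero_in_prob :: "(nat \<Rightarrow> 'a \<Rightarrow> real) \<Rightarrow> bool" where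
  "tendsto_zero_in_prob X \<longleftrightarrow>
     (\<forall>\<epsilon>>0. (\<lambda>n. prob {x \<in> space M. \<epsilon> < \<bar>X n x\<bar>}) \<longlonglongrightarrow> 0)"

lemma tendsto_zero_in_prob_cmult:
  assumes "tendsto_zero_in_prob X"
  shows "tendsto_zero_in_prob (\<lambda>n x. c * X n x)"
proof (cases "c = 0")
  case False
  have "{x \<in> space M. \<epsilon> < \<bar>c * X n x\<bar>} = {x \<in> space M. \<epsilon> / \<bar>c\<bar> < \<bar>X n x\<bar>}" for \<epsilon> n
    using False by (auto simp: abs_mult divide_less_eq mult.commute)
  then show ?thesis
    using assms False unfolding tendsto_zero_in_prob_def by simp
qed (simp add: tendsto_zero_in_prob_def)

lemma cdf_distr:
  assumes "f \<in> borel_measurable M"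
  shows "cdf (distr M borel f) y = prob {x \<in> space M. f x \<le> y}"
proof -
  have "cdf (distr M borel f) y = prob (f -` {..y} \<inter> space M)"
    unfolding cdf_def by (rule measure_distr[OF assms]) simp
  also have "f -` {..y} \<inter> space M = {x \<in> space M. f x \<le> y}" by auto
  finally show ?thesis .
qed

end

lemma (in real_distribution) cdf_continuity_points_nearby:
  assumes cont: "isCont (cdf M) x" and r: "r > 0"
  obtains \<epsilon> where "\<epsilon> > 0" "isCont (cdf M) (x - \<epsilon>)" "isCont (cdf M) (x + \<epsilon>)"
    "cdf M x - r < cdf M (x - \<epsilon>)" "cdf M (x + \<epsilon>) < cdf M x + r"
proof -
  let ?F = "cdf M"
  let ?D = "{y. \<not> isCont ?F y}"
  obtain \<delta> where \<delta>: "\<delta> > 0" "\<And>y. y \<noteq> x \<and> norm (y - x) < \<delta> \<Longrightarrow> norm (?F y - ?F x) < r"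
    using LIM_D[OF cont[unfolded isCont_def] r] by auto
  have "mono ?F" by (auto intro: monoI cdf_nondecreasing)
  then have "countable ((\<lambda>y. y - x) ` ?D \<union> (\<lambda>y. x - y) ` ?D)"
    using mono_ctble_discont by auto
  from open_minus_countable[OF this, of "{0<..<\<delta>}"] \<delta>
  obtain \<epsilon> where \<epsilon>: "\<epsilon> \<in> {0<..<\<delta>}" "\<epsilon> \<notin> (\<lambda>y. y - x) ` ?D \<union> (\<lambda>y. x - y) ` ?D"
    by auto
  have "x + \<epsilon> \<notin> ?D" "x - \<epsilon> \<notin> ?D"
    using \<epsilon>(2) by (force simp: image_iff)+
  moreover have "\<bar>?F (x + \<epsilon>) - ?F x\<bar> < r" "\<bar>?F (x - \<epsilon>) - ?F x\<bar> < r"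
    using \<delta>(2)[of "x + \<epsilon>"] \<delta>(2)[of "x - \<epsilon>"] \<epsilon>(1) by auto
  ultimately show ?thesis
    using \<epsilon>(1) by (intro that) auto
qed

lemma (in prob_space) prob_le_shifted_prob:
  fixes A B :: "'a \<Rightarrow> real"
  assumes [measurable]: "A \<in> borel_measurable M" "B \<in> borel_measurable M"
  shows "prob {y \<in> space M. B y \<le> x}
    \<le> prob {y \<in> space M. A y \<le> x + \<epsilon>} + prob {y \<in> space M. \<epsilon> < \<bar>B y - A y\<bar>}"
proof -
  have "prob {y \<in> space M. B y \<le> x}
      \<le> prob ({y \<in> space M. A y \<le> x + \<epsilon>} \<union> {y \<in> space M. \<epsilon> < \<bar>B y - A y\<bar>})"
  proof (rule finite_measure_mono)
    show "{y \<in> space M. A y \<le> x + \<epsilon>} \<union> {y \<in> space M. \<epsilon> < \<bar>B y - A y\<bar>} \<in> sets M"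
      by measurable
  qed (auto simp: abs_le_iff)
  also have "\<dots> \<le> prob {y \<in> space M. A y \<le> x + \<epsilon>} + prob {y \<in> space M. \<epsilon> < \<bar>B y - A y\<bar>}"
    by (rule measure_Un_le) auto
  finally show ?thesis .
qed

lemma (in prob_space) weak_conv_m_perturb:
  fixes A B :: "nat \<Rightarrow> 'a \<Rightarrow> real"
  assumes [measurable]: "\<And>n. A n \<in> borel_measurable M" "\<And>n. B n \<in> borel_measurable M"
    and conv: "weak_conv_m (\<lambda>n. distr M borel (A n)) \<mu>"
    and \<mu>: "real_distribution \<mu>"
    and small: "tendsto_zero_in_prob (\<lambda>n x. B n x - A n x)"
  shows "weak_conv_m (\<lambda>n. distr M borel (B n)) \<mu>"
  unfolding weak_conv_m_def weak_conv_def
proof (intro allI impI LIMSEQ_I)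
  interpret \<mu>: real_distribution \<mu> by (rule \<mu>)
  fix x r :: real
  assume cont: "isCont (cdf \<mu>) x" and r: "r > 0"
  let ?F = "cdf \<mu>" and ?FA = "\<lambda>n. cdf (distr M borel (A n))"
  obtain \<epsilon> where \<epsilon>: "\<epsilon> > 0" "isCont ?F (x - \<epsilon>)" "isCont ?F (x + \<epsilon>)"
    "?F x - r / 3 < ?F (x - \<epsilon>)" "?F (x + \<epsilon>) < ?F x + r / 3"
    using \<mu>.cdf_continuity_points_nearby[OF cont, of "r / 3"] r by auto
  let ?S = "\<lambda>n. {y \<in> space M. \<epsilon> < \<bar>B n y - A n y\<bar>}"
  have lim: "(\<lambda>n. ?FA n y) \<longlonglongrightarrow> ?F y" if "isCont ?F y" for y
    using conv that unfolding weak_conv_m_def weak_conv_def by blast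
  have r3: "0 < r / 3" "?F (x - \<epsilon>) - r / 3 < ?F (x - \<epsilon>)" "?F (x + \<epsilon>) < ?F (x + \<epsilon>) + r / 3"
    using r by auto
  have "\<forall>\<^sub>F n in sequentially. ?F (x - \<epsilon>) - r / 3 < ?FA n (x - \<epsilon>) \<and>
      ?FA n (x + \<epsilon>) < ?F (x + \<epsilon>) + r / 3 \<and> prob (?S n) < r / 3"
    using order_tendstoD(1)[OF lim[OF \<epsilon>(2)] r3(2)] order_tendstoD(2)[OF lim[OF \<epsilon>(3)] r3(3)]
      order_tendstoD(2)[OF small[unfolded tendsto_zero_in_prob_def, rule_format, OF \<epsilon>(1)] r3(1)]
    by eventually_elim auto
  then obtain N where N: "\<And>n. n \<ge> N \<Longrightarrow> ?F (x - \<epsilon>) - r / 3 < ?FA n (x - \<epsilon>) \<and>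
      ?FA n (x + \<epsilon>) < ?F (x + \<epsilon>) + r / 3 \<and> prob (?S n) < r / 3"
    unfolding eventually_sequentially by blast
  show "\<exists>N. \<forall>n\<ge>N. norm (cdf (distr M borel (B n)) x - ?F x) < r"
  proof (intro exI allI impI)
    fix n assume "n \<ge> N"
    then show "norm (cdf (distr M borel (B n)) x - ?F x) < r"
      using N[OF \<open>n \<ge> N\<close>] prob_le_shifted_prob[of "A n" "B n" x \<epsilon>] \<epsilon>(4,5)
        prob_le_shifted_prob[of "B n" "A n" "x - \<epsilon>" \<epsilon>]
      by (simp add: cdf_distr abs_minus_commute abs_less_iff)
  qed
qed

lemma normal_density_cdf_scale:
  assumes \<sigma>: "\<sigma> > 0"
  shows "cdf (density lborel (normal_density 0 \<sigma>)) y = cdf std_normal_distribution (y / \<sigma>)"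
proof -
  interpret S: prob_space std_normal_distribution by (rule prob_space_normal_density) simp
  have "distributed std_normal_distribution lborel (\<lambda>x. x) (\<lambda>x. ennreal (normal_density 0 1 x))"
    unfolding distributed_def by (auto intro!: distr_id2)
  from S.normal_density_affine[OF this, where \<alpha>=\<sigma> and \<beta>=0] \<sigma>
  have scaled: "distr std_normal_distribution lborel (\<lambda>x. \<sigma> * x) = density lborel (normal_density 0 \<sigma>)"
    by (simp add: distributed_def)
  have "cdf (density lborel (normal_density 0 \<sigma>)) y
      = measure std_normal_distribution ((\<lambda>x. \<sigma> * x) -` {..y} \<inter> space std_normal_distribution)"
    unfolding cdf_def scaled[symmetric] by (rule measure_distr) auto
  also have "(\<lambda>x. \<sigma> * x) -` {..y} \<inter> space std_normal_distribution = {..y / \<sigma>}"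
    using \<sigma> by (auto simp: pos_le_divide_eq mult.commute)
  finally show ?thesis by (simp add: cdf_def)
qed

lemma real_distribution_normal0: "v \<ge> 0 \<Longrightarrow> real_distribution (normal0 v)"
  by (auto simp: normal0_def real_distribution_def real_distribution_axioms_def
      prob_space_return intro!: prob_space_normal_density)

lemma (in prob_space) weak_conv_sum_normal_density:
  fixes X :: "nat \<Rightarrow> 'a \<Rightarrow> real"
  assumes indep: "indep_vars (\<lambda>_. borel) X UNIV"
    and mean: "\<And>n. expectation (X n) = 0" and \<sigma>: "\<sigma> > 0"
    and square_integrable: "\<And>n. integrable M (\<lambda>x. (X n x)\<^sup>2)"
    and second_moment: "\<And>n. expectation (\<lambda>x. (X n x)\<^sup>2) = \<sigma>\<^sup>2"
    and distrib: "\<And>n. distr M borel (X n) = \<mu>"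
  shows "weak_conv_m (\<lambda>n. distr M borel (\<lambda>x. (\<Sum>i<n. X i x) / sqrt n))
    (density lborel (normal_density 0 \<sigma>))"
proof -
  have [measurable]: "X i \<in> borel_measurable M" for i
    using indep by (auto simp: indep_vars_def)
  have clt: "weak_conv_m (\<lambda>n. distr M borel (\<lambda>x. (\<Sum>i<n. X i x - 0) / sqrt (n * \<sigma>\<^sup>2)))
      std_normal_distribution"
    by (rule central_limit_theorem[OF indep mean \<sigma> square_integrable])
      (auto simp: mean second_moment distrib)
  have std_cont: "isCont (cdf std_normal_distribution) z" for z
  proof -
    interpret S: real_distribution std_normal_distribution by (rule real_dist_normal_dist)
    have "emeasure std_normal_distribution {z} = 0"
      by (simp add: emeasure_density)
    then show ?thesis by (simp add: S.isCont_cdf S.emeasure_eq_measure)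
  qed
  have rescale: "cdf (distr M borel (\<lambda>x. (\<Sum>i<n. X i x) / sqrt n)) y =
      cdf (distr M borel (\<lambda>x. (\<Sum>i<n. X i x - 0) / sqrt (n * \<sigma>\<^sup>2))) (y / \<sigma>)" for n y
  proof -
    have "sqrt (n * \<sigma>\<^sup>2) = sqrt n * \<sigma>"
      using \<sigma> by (simp add: real_sqrt_mult)
    then have "{x \<in> space M. (\<Sum>i<n. X i x) / sqrt n \<le> y}
        = {x \<in> space M. (\<Sum>i<n. X i x - 0) / sqrt (n * \<sigma>\<^sup>2) \<le> y / \<sigma>}"
      using \<sigma> by (cases "n = 0") (auto simp: divide_le_eq le_divide_eq mult.commute
          mult.left_commute zero_le_divide_iff)
    then show ?thesis by (simp add: cdf_distr)
  qed
  show ?thesis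
    using clt std_cont unfolding weak_conv_m_def weak_conv_def
    by (simp add: rescale normal_density_cdf_scale[OF \<sigma>])
qed

text \<open>Unlike the library's central limit theorem this allows zero variance: then the summands
  vanish almost surely and the limit is the point mass at 0.\<close>

lemma (in prob_space) weak_conv_normal0_sum:
  fixes X :: "nat \<Rightarrow> 'a \<Rightarrow> real"
  assumes indep: "indep_vars (\<lambda>_. borel) X UNIV"
    and mean: "\<And>n. expectation (X n) = 0"
    and square_integrable: "\<And>n. integrable M (\<lambda>x. (X n x)\<^sup>2)"
    and second_moment: "\<And>n. expectation (\<lambda>x. (X n x)\<^sup>2) = v"
    and distrib: "\<And>n. distr M borel (X n) = \<mu>"
  shows "weak_conv_m (\<lambda>n. distr M borel (\<lambda>x. (\<Sum>i<n. X i x) / sqrt n)) (normal0 v)"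
proof (cases "v = 0")
  case True
  have [measurable]: "X i \<in> borel_measurable M" for i
    using indep by (auto simp: indep_vars_def)
  have "AE x in M. (X i x)\<^sup>2 = 0" for i
    using second_moment[of i] True
    by (subst integral_nonneg_eq_0_iff_AE[symmetric]) (auto simp: square_integrable)
  then have "AE x in M. \<forall>i. X i x = 0"
    by (simp add: AE_all_countable)
  then have "distr M borel (\<lambda>x. (\<Sum>i<n. X i x) / sqrt n) = distr M borel (\<lambda>_. 0)" for n
    by (intro distr_cong_AE) auto
  then show ?thesis
    using True by (simp add: normal0_def weak_conv_m_def weak_conv_def)
next
  case False
  have "v \<ge> 0"
    using second_moment[of 0] by (metis integral_nonneg_AE zero_le_power2 AE_I2)
  then have "sqrt v > 0" "(sqrt v)\<^sup>2 = v"
    using False by auto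
  then show ?thesis
    using weak_conv_sum_normal_density[OF indep mean _ square_integrable _ distrib, of "sqrt v"]
      second_moment False
    by (simp add: normal0_def)
qed

lemma (in prob_space) prob_abs_sum_ge_le:
  fixes X :: "nat \<Rightarrow> 'a \<Rightarrow> real"
  assumes indep: "indep_vars (\<lambda>_. borel) X UNIV"
    and bounded: "\<And>i x. x \<in> space M \<Longrightarrow> \<bar>X i x\<bar> \<le> C"
    and mean: "\<And>i. expectation (X i) = 0" and t: "t > 0"
  shows "prob {x \<in> space M. t \<le> \<bar>\<Sum>j<m. X j x\<bar>} \<le> real m * C\<^sup>2 / t\<^sup>2"
proof -
  have [measurable]: "X i \<in> borel_measurable M" for i
    using indep by (auto simp: indep_vars_def)
  have integrable: "integrable M (X i)" for i
    by (rule integrable_const_bound[where B=C]) (auto simp: bounded)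
  have integrable_prod: "integrable M (\<lambda>x. X i x * X j x)" for i j
    by (rule integrable_const_bound[where B="C * C"])
      (auto simp: bounded abs_mult intro!: mult_mono')
  have cross: "expectation (\<lambda>x. X i x * X j x) = 0" if "i \<noteq> j" for i j
  proof -
    have pair_indep: "indep_vars (\<lambda>_. borel) X {i, j}"
      by (rule indep_vars_subset[OF indep]) auto
    have "expectation (\<lambda>x. \<Prod>k\<in>{i, j}. X k x) = (\<Prod>k\<in>{i, j}. expectation (X k))"
      by (rule indep_vars_lebesgue_integral[OF _ pair_indep]) (auto intro: integrable)
    then show ?thesis using that by (simp add: mean)
  qed
  have diag: "expectation (\<lambda>x. X i x * X i x) \<le> C\<^sup>2" for i
  proof -
    have "X i x * X i x \<le> C\<^sup>2" if "x \<in> space M" for x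
    proof -
      have "\<bar>X i x\<bar> * \<bar>X i x\<bar> \<le> C * C"
        using bounded[OF that] by (intro mult_mono) (auto intro: order_trans[OF abs_ge_zero])
      then show ?thesis by (simp add: power2_eq_square)
    qed
    then have "expectation (\<lambda>x. X i x * X i x) \<le> expectation (\<lambda>_. C\<^sup>2)"
      by (intro integral_mono integrable_prod) auto
    then show ?thesis by (simp add: prob_space)
  qed
  have square: "(\<Sum>j<m. X j x)\<^sup>2 = (\<Sum>i<m. \<Sum>j<m. X i x * X j x)" for x
    by (simp add: power2_eq_square sum_product)
  have "expectation (\<lambda>x. (\<Sum>j<m. X j x)\<^sup>2) = (\<Sum>i<m. \<Sum>j<m. expectation (\<lambda>x. X i x * X j x))"
    unfolding square by (simp add: integrable_prod integrable_sum)
  also have "\<dots> = (\<Sum>i<m. expectation (\<lambda>x. X i x * X i x))"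
  proof (rule sum.cong[OF refl])
    fix i assume "i \<in> {..<m}"
    then show "(\<Sum>j<m. expectation (\<lambda>x. X i x * X j x)) = expectation (\<lambda>x. X i x * X i x)"
      by (subst sum.remove[of _ i]) (auto simp: cross intro!: sum.neutral)
  qed
  also have "\<dots> \<le> real m * C\<^sup>2"
    using sum_mono[of "{..<m}", OF diag] by simp
  finally have "expectation (\<lambda>x. (\<Sum>j<m. X j x)\<^sup>2) \<le> real m * C\<^sup>2" .
  moreover have "prob {x \<in> space M. t \<le> \<bar>\<Sum>j<m. X j x\<bar>}
      \<le> expectation (\<lambda>x. (\<Sum>j<m. X j x)\<^sup>2) / t\<^sup>2"
    by (rule second_moment_method) (auto simp: square integrable_prod integrable_sum t)
  ultimately show ?thesis
    using t by (meson divide_right_mono order_trans zero_le_power2)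
qed

section \<open>Coordinates of infinite product spaces\<close>

context prob_space
begin

lemma distr_PiM_coordinate:
  assumes "i \<in> I" and [measurable]: "f \<in> measurable M N"
  shows "distr (PiM I (\<lambda>_. M)) N (\<lambda>\<omega>. f (\<omega> i)) = distr M N f"
proof -
  have [measurable]: "(\<lambda>\<omega>. \<omega> i) \<in> measurable (PiM I (\<lambda>_. M)) M"
    using assms(1) by (rule measurable_component_singleton)
  have "distr (PiM I (\<lambda>_. M)) N (\<lambda>\<omega>. f (\<omega> i))
      = distr (distr (PiM I (\<lambda>_. M)) M (\<lambda>\<omega>. \<omega> i)) N f"
    by (simp add: distr_distr comp_def)
  also have "distr (PiM I (\<lambda>_. M)) M (\<lambda>\<omega>. \<omega> i) = M"
    using assms(1) by (intro distr_PiM_component) (auto intro: prob_space_axioms)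
  finally show ?thesis .
qed

lemma integral_PiM_coordinate:
  fixes f :: "'a \<Rightarrow> real"
  assumes "i \<in> I" and [measurable]: "f \<in> borel_measurable M"
  shows "integral\<^sup>L (PiM I (\<lambda>_. M)) (\<lambda>\<omega>. f (\<omega> i)) = expectation f"
proof -
  have [measurable]: "(\<lambda>\<omega>. \<omega> i) \<in> measurable (PiM I (\<lambda>_. M)) M"
    using assms(1) by (rule measurable_component_singleton)
  have "integral\<^sup>L (PiM I (\<lambda>_. M)) (\<lambda>\<omega>. f (\<omega> i))
      = integral\<^sup>L (distr (PiM I (\<lambda>_. M)) M (\<lambda>\<omega>. \<omega> i)) f"
    by (simp add: integral_distr)
  also have "distr (PiM I (\<lambda>_. M)) M (\<lambda>\<omega>. \<omega> i) = M"
    using assms(1) by (intro distr_PiM_component) (auto intro: prob_space_axioms)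
  finally show ?thesis .
qed

lemma indep_vars_PiM_coordinates:
  assumes "I \<noteq> {}" and [measurable]: "f \<in> measurable M N"
  shows "prob_space.indep_vars (PiM I (\<lambda>_. M)) (\<lambda>_. N) (\<lambda>i \<omega>. f (\<omega> i)) I"
proof -
  interpret product: product_prob_space "\<lambda>_. M" I
    by (rule product_prob_spaceI) (rule prob_space_axioms)
  have "product.indep_vars (\<lambda>_. M) (\<lambda>i \<omega>. \<omega> i) I"
  proof (subst product.indep_vars_iff_distr_eq_PiM')
    have "distr (PiM I (\<lambda>_. M)) (PiM I (\<lambda>_. M)) (\<lambda>\<omega>. \<lambda>i\<in>I. \<omega> i)
        = distr (PiM I (\<lambda>_. M)) (PiM I (\<lambda>_. M)) (\<lambda>\<omega>. \<omega>)"
      by (rule distr_cong) (auto simp: space_PiM restrict_PiE)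
    also have "\<dots> = PiM I (\<lambda>i. distr (PiM I (\<lambda>_. M)) M (\<lambda>\<omega>. \<omega> i))"
      by (auto simp: distr_id2 intro!: PiM_cong distr_PiM_component[symmetric] prob_space_axioms)
    finally show "distr (PiM I (\<lambda>_. M)) (PiM I (\<lambda>_. M)) (\<lambda>\<omega>. \<lambda>i\<in>I. \<omega> i)
        = PiM I (\<lambda>i. distr (PiM I (\<lambda>_. M)) M (\<lambda>\<omega>. \<omega> i))" .
  qed (use assms(1) in auto)
  then show ?thesis
    by (rule product.indep_vars_compose2) simp
qed

lemma distr_PiM_finite_prefix:
  assumes "finite J" "J \<subseteq> I"
    and [measurable]: "f \<in> measurable (PiM J (\<lambda>_. M)) N"
    and depends_on_J: "\<And>\<omega>. f (restrict \<omega> J) = f \<omega>"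
  shows "distr (PiM J (\<lambda>_. M)) N f = distr (PiM I (\<lambda>_. M)) N f"
proof -
  interpret product: product_prob_space "\<lambda>_. M" I
    by (rule product_prob_spaceI) (rule prob_space_axioms)
  have [measurable]: "(\<lambda>\<omega>. restrict \<omega> J) \<in> measurable (PiM I (\<lambda>_. M)) (PiM J (\<lambda>_. M))"
    using assms(2) by (rule measurable_restrict_subset)
  have "distr (PiM J (\<lambda>_. M)) N f
      = distr (distr (PiM I (\<lambda>_. M)) (PiM J (\<lambda>_. M)) (\<lambda>\<omega>. restrict \<omega> J)) N f"
    using assms(1,2) by (simp add: product.distr_PiM_restrict_finite)
  also have "\<dots> = distr (PiM I (\<lambda>_. M)) N f"
    by (simp add: distr_distr comp_def depends_on_J)
  finally show ?thesis .
qed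

end

section \<open>Linearization error of a ratio estimator\<close>

lemma ratio_perturbation_bounds:
  fixes p n K d a c :: real
  assumes p: "p > 0" and n: "n > 0" and K: "K > 0" and d: "d > 0" "d \<le> p / 2"
    and c: "\<bar>c - n * p\<bar> < n * d" and a: "\<bar>a\<bar> < sqrt n * K"
  shows "\<bar>a / c\<bar> \<le> 2 * K / (sqrt n * p)"
    and "\<bar>sqrt n * (a / c) - a / (sqrt n * p)\<bar> \<le> 2 * K * d / p\<^sup>2"
proof -
  have "n * d \<le> n * (p / 2)"
    using n d by (intro mult_left_mono) auto
  then have c_large: "c > n * p / 2"
    using c by (auto simp: abs_less_iff)
  have np_pos: "n * p / 2 > 0"
    using n p by simp
  then have c_pos: "c > 0"
    using c_large by linarith
  define s where "s = sqrt n"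
  have s: "s > 0" "s * s = n"
    using n by (simp_all add: s_def)
  have a_le: "\<bar>a\<bar> \<le> s * K"
    using a by (simp add: s_def)
  have "\<bar>a / c\<bar> = \<bar>a\<bar> / c"
    using c_pos by simp
  also have "\<dots> \<le> (s * K) / (n * p / 2)"
    using a_le np_pos c_large s K by (intro frac_le) auto
  also have "\<dots> = 2 * K / (s * p)"
    using s p by (simp add: s(2)[symmetric] field_simps)
  finally show "\<bar>a / c\<bar> \<le> 2 * K / (sqrt n * p)"
    by (simp add: s_def)
  have "s * (a / c) - a / (s * p) = a * (n * p - c) / (s * c * p)"
    using s c_pos p by (simp add: field_simps s(2)[symmetric])
  then have "\<bar>s * (a / c) - a / (s * p)\<bar> = \<bar>a\<bar> * \<bar>c - n * p\<bar> / (s * c * p)"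
    using s c_pos p by (simp add: abs_mult abs_minus_commute)
  also have "\<dots> \<le> (s * K) * (n * d) / (s * (n * p / 2) * p)"
  proof (rule frac_le)
    show "\<bar>a\<bar> * \<bar>c - n * p\<bar> \<le> s * K * (n * d)"
      using a_le c s K by (intro mult_mono) auto
    show "s * (n * p / 2) * p \<le> s * c * p"
      using s c_large p by (intro mult_right_mono mult_left_mono) auto
  qed (use s K n d np_pos p in auto)
  also have "\<dots> = 2 * K * d / p\<^sup>2"
    using s n p by (simp add: field_simps power2_eq_square)
  finally show "\<bar>sqrt n * (a / c) - a / (sqrt n * p)\<bar> \<le> 2 * K * d / p\<^sup>2"
    by (simp add: s_def)
qed

lemma has_derivative_linear_approx:
  fixes phi :: "real \<times> real \<Rightarrow> real"
  assumes "(phi has_derivative (\<lambda>(h0, h1). k0 * h0 + k1 * h1)) (at (M0, M1))" and "\<eta> > 0"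
  obtains \<delta> where "\<delta> > 0" "\<And>y. norm (y - (M0, M1)) < \<delta> \<Longrightarrow>
      \<bar>phi y - phi (M0, M1) - (k0 * (fst y - M0) + k1 * (snd y - M1))\<bar> \<le> \<eta> * norm (y - (M0, M1))"
proof -
  from assms[unfolded has_derivative_at_alt]
  obtain \<delta> where "\<delta> > 0" and approx: "\<And>y. norm (y - (M0, M1)) < \<delta> \<Longrightarrow>
      norm (phi y - phi (M0, M1) - (\<lambda>(h0, h1). k0 * h0 + k1 * h1) (y - (M0, M1)))
      \<le> \<eta> * norm (y - (M0, M1))"
    by blast
  moreover have "\<bar>phi y - phi (M0, M1) - (k0 * (fst y - M0) + k1 * (snd y - M1))\<bar>
      \<le> \<eta> * norm (y - (M0, M1))" if "norm (y - (M0, M1)) < \<delta>" for y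
    using approx[OF that] by (cases y) simp
  ultimately show ?thesis
    using that by blast
qed

lemma linearization_remainder_bound:
  fixes phi :: "real \<times> real \<Rightarrow> real" and n :: real
  assumes p0: "p0 > 0" and p1: "p1 > 0" and n: "n > 0" and K: "K > 0" and d: "d > 0" "d \<le> p0 / 2" "d \<le> p1 / 2"
    and c0: "\<bar>c0 - n * p0\<bar> < n * d" and c1: "\<bar>c1 - n * p1\<bar> < n * d"
    and a0: "\<bar>a0\<bar> < sqrt n * K" and a1: "\<bar>a1\<bar> < sqrt n * K"
    and deriv: "\<And>y. norm (y - (M0, M1)) < \<delta> \<Longrightarrow>
        \<bar>phi y - phi (M0, M1) - (k0 * (fst y - M0) + k1 * (snd y - M1))\<bar> \<le> \<eta> * norm (y - (M0, M1))"
    and eta: "\<eta> \<ge> 0"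
    and small: "2 * K / (sqrt n * p0) + 2 * K / (sqrt n * p1) < \<delta>"
  shows "\<bar>sqrt n * (phi (M0 + a0 / c0, M1 + a1 / c1) - phi (M0, M1)) - (k0 * a0 / p0 + k1 * a1 / p1) / sqrt n\<bar>
     \<le> \<eta> * (2 * K / p0 + 2 * K / p1) + \<bar>k0\<bar> * (2 * K * d / p0\<^sup>2) + \<bar>k1\<bar> * (2 * K * d / p1\<^sup>2)"
proof -
  note g0 = ratio_perturbation_bounds[OF p0 n K d(1) d(2) c0 a0]
  note g1 = ratio_perturbation_bounds[OF p1 n K d(1) d(3) c1 a1]
  define s where "s = sqrt n"
  have s: "s > 0" using n by (simp add: s_def)
  define D0 where "D0 = a0 / c0"
  define D1 where "D1 = a1 / c1"
  define B0 where "B0 = 2 * K / (s * p0)"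
  define B1 where "B1 = 2 * K / (s * p1)"
  have D0: "\<bar>D0\<bar> \<le> B0" using g0(1) by (simp add: D0_def B0_def s_def)
  have D1: "\<bar>D1\<bar> \<le> B1" using g1(1) by (simp add: D1_def B1_def s_def)
  have nrm: "norm ((M0 + D0, M1 + D1) - (M0, M1)) \<le> \<bar>D0\<bar> + \<bar>D1\<bar>"
    using sqrt_sum_squares_le_sum_abs[of D0 D1] by (simp add: norm_Pair)
  have close: "norm ((M0 + D0, M1 + D1) - (M0, M1)) < \<delta>"
    using nrm D0 D1 small by (simp add: B0_def B1_def s_def)
  have rho: "\<bar>phi (M0 + D0, M1 + D1) - phi (M0, M1) - (k0 * D0 + k1 * D1)\<bar> \<le> \<eta> * (B0 + B1)"
  proof -
    have "\<bar>phi (M0 + D0, M1 + D1) - phi (M0, M1) - (k0 * D0 + k1 * D1)\<bar>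
        \<le> \<eta> * norm ((M0 + D0, M1 + D1) - (M0, M1))"
      using deriv[OF close] by simp
    also have "\<dots> \<le> \<eta> * (B0 + B1)"
      using nrm D0 D1 eta by (intro mult_left_mono) auto
    finally show ?thesis .
  qed
  define rh where "rh = phi (M0 + D0, M1 + D1) - phi (M0, M1) - (k0 * D0 + k1 * D1)"
  have T0: "\<bar>s * D0 - a0 / (s * p0)\<bar> \<le> 2 * K * d / p0\<^sup>2" using g0(2) by (simp add: D0_def s_def)
  have T1: "\<bar>s * D1 - a1 / (s * p1)\<bar> \<le> 2 * K * d / p1\<^sup>2" using g1(2) by (simp add: D1_def s_def)
  have eq: "s * (phi (M0 + D0, M1 + D1) - phi (M0, M1)) - (k0 * a0 / p0 + k1 * a1 / p1) / s
      = s * rh + k0 * (s * D0 - a0 / (s * p0)) + k1 * (s * D1 - a1 / (s * p1))"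
    using s p0 p1 by (simp add: rh_def field_simps)
  have "\<bar>s * rh + k0 * (s * D0 - a0 / (s * p0)) + k1 * (s * D1 - a1 / (s * p1))\<bar>
     \<le> s * \<bar>rh\<bar> + \<bar>k0\<bar> * \<bar>s * D0 - a0 / (s * p0)\<bar> + \<bar>k1\<bar> * \<bar>s * D1 - a1 / (s * p1)\<bar>"
  proof -
    have tri: "\<bar>x + y + z\<bar> \<le> \<bar>x\<bar> + \<bar>y\<bar> + \<bar>z\<bar>" for x y z :: real by arith
    show ?thesis using tri[of "s * rh" "k0 * (s * D0 - a0 / (s * p0))" "k1 * (s * D1 - a1 / (s * p1))"] s
      by (simp add: abs_mult)
  qed
  also have "\<dots> \<le> s * (\<eta> * (B0 + B1)) + \<bar>k0\<bar> * (2 * K * d / p0\<^sup>2) + \<bar>k1\<bar> * (2 * K * d / p1\<^sup>2)"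
    using rho T0 T1 s unfolding rh_def by (intro add_mono mult_left_mono) auto
  also have "s * (\<eta> * (B0 + B1)) = \<eta> * (2 * K / p0 + 2 * K / p1)"
    using s p0 p1 by (simp add: B0_def B1_def field_simps)
  finally show ?thesis unfolding eq[unfolded s_def D0_def D1_def, symmetric] s_def D0_def D1_def .
qed

section \<open>Sample statistics\<close>

lemma sum_zero_one_in_range:
  fixes f :: "nat \<Rightarrow> real"
  assumes "\<And>j. j < m \<Longrightarrow> f j \<in> {0, 1}"
  shows "(\<Sum>j<m. f j) \<in> real ` {..m}"
  using assms
proof (induction m)
  case (Suc m)
  then obtain k where k: "k \<le> m" "(\<Sum>j<m. f j) = real k"
    by auto
  have "f m \<in> {0, 1}"
    using Suc.prems by auto
  then show ?case
  proof
    assume "f m = 0"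
    then show ?case using k by (auto intro: rev_image_eqI[of k])
  next
    assume "f m \<in> {1}"
    then show ?case using k by (auto intro: rev_image_eqI[of "Suc k"])
  qed
qed simp

lemma measurable_comp_finite_range:
  fixes h :: "'a \<Rightarrow> 'b :: {topological_space, t1_space}" and g :: "'b \<Rightarrow> real"
  assumes h: "h \<in> borel_measurable M" and F: "finite F" "h ` space M \<subseteq> F"
  shows "(\<lambda>x. g (h x)) \<in> borel_measurable M"
proof -
  have "(\<lambda>x. \<Sum>p\<in>F. g p * indicator (h -` {p} \<inter> space M) x) \<in> borel_measurable M"
    using h by (intro borel_measurable_sum borel_measurable_times borel_measurable_const
        borel_measurable_indicator measurable_sets[OF h]) auto
  moreover have "(\<Sum>p\<in>F. g p * indicator (h -` {p} \<inter> space M) x) = g (h x)"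
    if "x \<in> space M" for x
  proof -
    have "(\<Sum>p\<in>F. g p * indicator (h -` {p} \<inter> space M) x) = (\<Sum>p\<in>F. if p = h x then g p else 0)"
      using that by (intro sum.cong) (auto simp: indicator_def)
    also have "\<dots> = g (h x)"
      using F that by (auto simp: sum.delta')
    finally show ?thesis .
  qed
  ultimately show ?thesis
    by (rule measurable_cong[THEN iffD1, rotated])
qed

lemma grp_count_eq_sum: "real (grp_count m D s) = (\<Sum>j<m. if snd (D j) = s then 1 else 0)"
proof -
  have "{j. j < m \<and> snd (D j) = s} = {j \<in> {..<m}. snd (D j) = s}" by auto
  then show ?thesis
    unfolding grp_count_def by (simp add: sum.inter_filter[symmetric])
qed

lemma samp_grp_mean_eq_sums:
  "samp_grp_mean m g D s =
     (if (\<Sum>j<m. if snd (D j) = s then 1 else 0 :: real) = 0 then 0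
      else (\<Sum>j<m. if snd (D j) = s then g (D j) else 0) / (\<Sum>j<m. if snd (D j) = s then 1 else 0))"
proof -
  have filter: "{j. j < m \<and> snd (D j) = s} = {j \<in> {..<m}. snd (D j) = s}" by auto
  have "(\<Sum>j\<in>{j. j < m \<and> snd (D j) = s}. g (D j)) = (\<Sum>j<m. if snd (D j) = s then g (D j) else 0)"
    unfolding filter by (rule sum.inter_filter) simp
  then show ?thesis
    unfolding samp_grp_mean_def grp_count_eq_sum[symmetric] by simp
qed

lemma samp_grp_mean_in_ratios:
  assumes "\<And>j. j < m \<Longrightarrow> g (D j) \<in> {0, 1}"
  shows "samp_grp_mean m g D s \<in> (\<lambda>(a, b). real a / real b) ` ({..m} \<times> {..m})"
proof -
  have "(\<Sum>j<m. if snd (D j) = s then g (D j) else 0) \<in> real ` {..m}"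
    by (rule sum_zero_one_in_range) (use assms in auto)
  then obtain a where "a \<le> m" "(\<Sum>j<m. if snd (D j) = s then g (D j) else 0) = real a"
    by auto
  moreover have "(\<Sum>j<m. if snd (D j) = s then 1 else 0 :: real) \<in> real ` {..m}"
    by (rule sum_zero_one_in_range) auto
  then obtain b where "b \<le> m" "(\<Sum>j<m. if snd (D j) = s then 1 else 0 :: real) = real b"
    by auto
  ultimately show ?thesis
    unfolding samp_grp_mean_eq_sums by (force intro: image_eqI[of _ _ "(a, b)"])
qed

lemma samp_mean_restrict: "samp_mean m g (restrict D {..<m}) = samp_mean m g D"
  unfolding samp_mean_def by (intro arg_cong2[where f = "(/)"] sum.cong) auto

lemma samp_grp_mean_restrict: "samp_grp_mean m g (restrict D {..<m}) s = samp_grp_mean m g D s"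
proof -
  have sums: "(\<Sum>j<m. F (restrict D {..<m} j)) = (\<Sum>j<m. F (D j))" for F :: "_ \<Rightarrow> real"
    by (rule sum.cong) auto
  show ?thesis
    unfolding samp_grp_mean_eq_sums sums[of "\<lambda>x. if snd x = s then g x else 0"]
      sums[of "\<lambda>x. if snd x = s then 1 else 0"] ..
qed

section \<open>The population model\<close>

locale group_risk_model =
  fixes Mz :: "'z measure" and P :: "('z \<times> nat) measure" and ell mu :: "'z \<times> nat \<Rightarrow> real"
  assumes prob: "prob_space P"
    and sets_P: "sets P = sets (Mz \<Otimes>\<^sub>M count_space {0, 1})"
    and pi_pos: "\<And>s. s \<in> {0, 1} \<Longrightarrow> grp_prob P s > 0"
    and ell_meas[measurable]: "ell \<in> borel_measurable P"
    and mu_meas[measurable]: "mu \<in> borel_measurable P"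
    and ell_01: "\<And>x. x \<in> space P \<Longrightarrow> ell x \<in> {0, 1}"
    and mu_01: "\<And>x. x \<in> space P \<Longrightarrow> mu x \<in> {0, 1}"
begin

sublocale P: prob_space P by (rule prob)

lemma snd_in_groups:
  assumes "x \<in> space P"
  shows "snd x \<in> {0, 1}"
proof -
  have "space P = space Mz \<times> {0, 1}"
    using sets_eq_imp_space_eq[OF sets_P] by (simp only: space_pair_measure space_count_space)
  with assms show ?thesis by (simp add: mem_Times_iff)
qed

lemma measurable_snd_P[measurable]: "snd \<in> measurable P (count_space {0, 1})"
  using measurable_snd[of Mz "count_space {0, 1 :: nat}"]
  by (simp add: measurable_cong_sets[OF sets_P refl])

lemma sets_group[measurable]: "{x \<in> space P. snd x = s} \<in> sets P"
proof (cases "s \<in> {0, 1}")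
  case True
  have "{x \<in> space P. snd x = s} = snd -` {s} \<inter> space P" by auto
  then show ?thesis
    using True by (auto intro: measurable_sets[OF measurable_snd_P])
next
  case False
  then have "{x \<in> space P. snd x = s} = {}" by (auto dest: snd_in_groups)
  then show ?thesis by simp
qed

text \<open>Since ell, mu and the group label only take the values 0 and 1, every population quantity
  in the theorem is a rational function of the probabilities of these eight cells.\<close>

definition cell :: "real \<Rightarrow> real \<Rightarrow> nat \<Rightarrow> real" where
  "cell e u s = measure P {x \<in> space P. ell x = e \<and> mu x = u \<and> snd x = s}"

lemma integral_by_cells:
  assumes "\<And>x. x \<in> space P \<Longrightarrow> f x = g (ell x) (mu x) (snd x)"
  shows "integral\<^sup>L P f = (\<Sum>e\<in>{0,1}. \<Sum>u\<in>{0,1}. \<Sum>s\<in>{0,1::nat}. g e u s * cell e u s)"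
proof -
  let ?C = "\<lambda>e u s. {x \<in> space P. ell x = e \<and> mu x = u \<and> snd x = s}"
  have [measurable]: "?C e u s \<in> sets P" for e u s
    by measurable
  have "f x = (\<Sum>e\<in>{0,1}. \<Sum>u\<in>{0,1}. \<Sum>s\<in>{0,1::nat}. g e u s * indicator (?C e u s) x)"
    if x: "x \<in> space P" for x
    using assms[OF x] ell_01[OF x] mu_01[OF x] snd_in_groups[OF x] x
    by (auto simp: indicator_def)
  then have "integral\<^sup>L P f
      = integral\<^sup>L P (\<lambda>x. \<Sum>e\<in>{0,1}. \<Sum>u\<in>{0,1}. \<Sum>s\<in>{0,1::nat}. g e u s * indicator (?C e u s) x)"
    by (rule Bochner_Integration.integral_cong[OF refl])
  also have "\<dots> = (\<Sum>e\<in>{0,1}. \<Sum>u\<in>{0,1}. \<Sum>s\<in>{0,1::nat}.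
      integral\<^sup>L P (\<lambda>x. g e u s * indicator (?C e u s) x))"
  proof -
    have int: "integrable P (\<lambda>x. c * indicator (?C e u s) x :: real)" for c e u s
      by (intro integrable_mult_right integrable_real_indicator) (auto simp: P.emeasure_eq_measure)
    show ?thesis
      by (subst Bochner_Integration.integral_sum, (intro Bochner_Integration.integrable_sum int)+,
          intro sum.cong refl)+
  qed
  also have "\<dots> = (\<Sum>e\<in>{0,1}. \<Sum>u\<in>{0,1}. \<Sum>s\<in>{0,1::nat}. g e u s * cell e u s)"
    by (simp add: cell_def Int_absorb2)
  finally show ?thesis .
qed

definition grp_mass :: "nat \<Rightarrow> real" where
  "grp_mass s = cell 0 0 s + cell 0 1 s + cell 1 0 s + cell 1 1 s"

definition ell_mass :: "nat \<Rightarrow> real" where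
  "ell_mass s = cell 1 0 s + cell 1 1 s"

definition mu_mass :: "nat \<Rightarrow> real" where
  "mu_mass s = cell 0 1 s + cell 1 1 s"

lemma cells_by_masses:
  "cell 0 0 s = grp_mass s - ell_mass s - mu_mass s + cell 1 1 s"
  "cell 0 1 s = mu_mass s - cell 1 1 s" "cell 1 0 s = ell_mass s - cell 1 1 s"
  by (simp_all add: grp_mass_def ell_mass_def mu_mass_def)

lemma masses_nonneg: "0 \<le> cell 1 1 s" "cell 1 1 s \<le> ell_mass s" "cell 1 1 s \<le> mu_mass s"
  "ell_mass s \<le> grp_mass s" "mu_mass s \<le> grp_mass s"
  by (simp_all add: grp_mass_def ell_mass_def mu_mass_def cell_def)

lemma grp_prob_eq_grp_mass:
  assumes "s \<in> {0, 1}"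
  shows "grp_prob P s = grp_mass s"
proof -
  have "grp_prob P s = P.expectation (indicator {y \<in> space P. snd y = s})"
    by (simp add: grp_prob_def Int_absorb2)
  also have "\<dots> = (\<Sum>e\<in>{0,1}. \<Sum>u\<in>{0,1}. \<Sum>t\<in>{0,1::nat}. (if t = s then 1 else 0) * cell e u t)"
    by (rule integral_by_cells) (simp add: indicator_def)
  finally show ?thesis
    using assms by (auto simp: grp_mass_def)
qed

lemma grp_mass_sum: "grp_mass 0 + grp_mass 1 = 1"
  using integral_by_cells[of "\<lambda>_. 1" "\<lambda>_ _ _. 1"] by (simp add: grp_mass_def P.prob_space)

lemma grp_mass_pos: "s \<in> {0, 1} \<Longrightarrow> grp_mass s > 0"
  using pi_pos grp_prob_eq_grp_mass by force

lemma cond_mean_by_cells: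
  assumes s: "s \<in> {0, 1}" and g: "\<And>x. x \<in> space P \<Longrightarrow> g x = h (ell x) (mu x)"
  shows "cond_mean P g s = (\<Sum>e\<in>{0,1}. \<Sum>u\<in>{0,1}. h e u * cell e u s) / grp_mass s"
proof -
  have "(\<integral>x. g x * indicator {y \<in> space P. snd y = s} x \<partial>P)
      = (\<Sum>e\<in>{0,1}. \<Sum>u\<in>{0,1}. \<Sum>t\<in>{0,1::nat}. (h e u * (if t = s then 1 else 0)) * cell e u t)"
    by (rule integral_by_cells) (simp add: g indicator_def)
  also have "\<dots> = (\<Sum>e\<in>{0,1}. \<Sum>u\<in>{0,1}. h e u * cell e u s)"
    using s by auto
  finally show ?thesis
    using s by (simp add: cond_mean_def grp_prob_eq_grp_mass)
qed

lemma cond_mean_ell: "s \<in> {0, 1} \<Longrightarrow> cond_mean P ell s = ell_mass s / grp_mass s"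
  by (subst cond_mean_by_cells[where h = "\<lambda>e u. e"]) (auto simp: ell_mass_def)

lemma cond_mean_mu: "s \<in> {0, 1} \<Longrightarrow> cond_mean P mu s = mu_mass s / grp_mass s"
  by (subst cond_mean_by_cells[where h = "\<lambda>e u. u"]) (auto simp: mu_mass_def)

lemma cond_var_ell:
  assumes s: "s \<in> {0, 1}"
  shows "cond_var P ell s = (ell_mass s - (ell_mass s)\<^sup>2 / grp_mass s) / grp_mass s"
  using grp_mass_pos[OF s] unfolding cond_var_def cond_mean_ell[OF s]
  by (subst cond_mean_by_cells[OF s, where h = "\<lambda>e u. (e - ell_mass s / grp_mass s)\<^sup>2"])
    (auto simp: cells_by_masses field_simps power2_eq_square)

lemma cond_var_mu:
  assumes s: "s \<in> {0, 1}"
  shows "cond_var P mu s = (mu_mass s - (mu_mass s)\<^sup>2 / grp_mass s) / grp_mass s"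
  using grp_mass_pos[OF s] unfolding cond_var_def cond_mean_mu[OF s]
  by (subst cond_mean_by_cells[OF s, where h = "\<lambda>e u. (u - mu_mass s / grp_mass s)\<^sup>2"])
    (auto simp: cells_by_masses field_simps power2_eq_square)

lemma cond_cov_ell_mu:
  assumes s: "s \<in> {0, 1}"
  shows "cond_cov P ell mu s = (cell 1 1 s - ell_mass s * mu_mass s / grp_mass s) / grp_mass s"
  using grp_mass_pos[OF s] unfolding cond_cov_def cond_mean_ell[OF s] cond_mean_mu[OF s]
  by (subst cond_mean_by_cells[OF s, where
        h = "\<lambda>e u. (e - ell_mass s / grp_mass s) * (u - mu_mass s / grp_mass s)"])
    (auto simp: cells_by_masses field_simps power2_eq_square)

lemma expectation_ell: "P.expectation ell = ell_mass 0 + ell_mass 1"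
  by (subst integral_by_cells[where g = "\<lambda>e u s. e"]) (auto simp: ell_mass_def)

lemma total_variance_ell:
  "(\<Sum>s\<in>{0, 1}. grp_prob P s * cond_var P ell s)
     + grp_prob P 0 * grp_prob P 1 * (cond_mean P ell 0 - cond_mean P ell 1)\<^sup>2
   = P.expectation ell - (P.expectation ell)\<^sup>2"
proof -
  have total_variance_bernoulli: "p0 * ((a0 - a0\<^sup>2 / p0) / p0) + p1 * ((a1 - a1\<^sup>2 / p1) / p1)
      + p0 * p1 * (a0 / p0 - a1 / p1)\<^sup>2 = (a0 + a1) - (a0 + a1)\<^sup>2"
    if "p0 > 0" "p1 > 0" "p0 + p1 = 1" for p0 p1 a0 a1 :: real
  proof -
    have complement: "1 - p1 = p0" "1 - p0 = p1"
      using that(3) by linarith+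
    have "p0 * ((a0 - a0\<^sup>2 / p0) / p0) + p1 * ((a1 - a1\<^sup>2 / p1) / p1)
        + p0 * p1 * (a0 / p0 - a1 / p1)\<^sup>2
        = a0 + a1 - a0\<^sup>2 * (1 - p1) / p0 - a1\<^sup>2 * (1 - p0) / p1 - 2 * a0 * a1"
      using that(1,2) by (simp add: field_simps power2_eq_square)
    also have "\<dots> = (a0 + a1) - (a0 + a1)\<^sup>2"
      using that(1,2) unfolding complement by (simp add: power2_eq_square algebra_simps)
    finally show ?thesis .
  qed
  show ?thesis
    using total_variance_bernoulli[OF grp_mass_pos grp_mass_pos grp_mass_sum]
    by (simp add: grp_prob_eq_grp_mass cond_var_ell cond_mean_ell expectation_ell)
qed

definition grp_deviation :: "nat \<Rightarrow> 'z \<times> nat \<Rightarrow> real" where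
  "grp_deviation s x = (if snd x = s then mu x - cond_mean P mu s else 0)"

definition influence :: "real \<Rightarrow> real \<Rightarrow> real \<Rightarrow> 'z \<times> nat \<Rightarrow> real" where
  "influence lam k0 k1 x = lam * (ell x - P.expectation ell)
     + (1 - lam) * (k0 * grp_deviation 0 x / grp_prob P 0 + k1 * grp_deviation 1 x / grp_prob P 1)"

definition limit_variance :: "real \<Rightarrow> real \<Rightarrow> real \<Rightarrow> real" where
  "limit_variance lam k0 k1 =
     lam\<^sup>2 * (\<Sum>s\<in>{0, 1}. grp_prob P s * cond_var P ell s)
     + lam\<^sup>2 * grp_prob P 0 * grp_prob P 1 * (cond_mean P ell 0 - cond_mean P ell 1)\<^sup>2
     + (1 - lam)\<^sup>2 * (k0\<^sup>2 * cond_var P mu 0 / grp_prob P 0 + k1\<^sup>2 * cond_var P mu 1 / grp_prob P 1)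
     + 2 * lam * (1 - lam) * (k0 * cond_cov P ell mu 0 + k1 * cond_cov P ell mu 1)"

lemma influence_by_cells:
  "influence lam k0 k1 x = lam * (ell x - (ell_mass 0 + ell_mass 1))
     + (if snd x = 0 then ((1 - lam) * k0 / grp_mass 0) * (mu x - mu_mass 0 / grp_mass 0) else 0)
     + (if snd x = 1 then ((1 - lam) * k1 / grp_mass 1) * (mu x - mu_mass 1 / grp_mass 1) else 0)"
  using grp_mass_pos[of 0] grp_mass_pos[of 1]
  by (auto simp: influence_def grp_deviation_def expectation_ell cond_mean_mu grp_prob_eq_grp_mass)

lemma expectation_influence: "P.expectation (influence lam k0 k1) = 0"
proof -
  define E where "E = ell_mass 0 + ell_mass 1"
  define M where "M s = mu_mass s / grp_mass s" for s
  define c where "c s = (1 - lam) * (if s = 0 then k0 else k1) / grp_mass s" for s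
  have "P.expectation (influence lam k0 k1) = (\<Sum>e\<in>{0,1}. \<Sum>u\<in>{0,1}. \<Sum>t\<in>{0,1::nat}.
      (lam * (e - E) + (if t = 0 then c 0 * (u - M 0) else 0)
        + (if t = 1 then c 1 * (u - M 1) else 0)) * cell e u t)"
    by (rule integral_by_cells) (simp add: influence_by_cells E_def M_def c_def)
  also have "\<dots> = lam * (ell_mass 0 + ell_mass 1 - E * (grp_mass 0 + grp_mass 1))
      + c 0 * (mu_mass 0 - M 0 * grp_mass 0) + c 1 * (mu_mass 1 - M 1 * grp_mass 1)"
    by (simp add: cells_by_masses algebra_simps)
  also have "\<dots> = 0"
    using grp_mass_pos[of 0] grp_mass_pos[of 1] grp_mass_sum by (simp add: E_def M_def)
  finally show ?thesis .
qed

lemma expectation_influence_square: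
  "P.expectation (\<lambda>x. (influence lam k0 k1 x)\<^sup>2) = limit_variance lam k0 k1"
proof -
  define E where "E = ell_mass 0 + ell_mass 1"
  define M where "M s = mu_mass s / grp_mass s" for s
  define c where "c s = (1 - lam) * (if s = 0 then k0 else k1) / grp_mass s" for s
  define cov_term where "cov_term s =
      2 * lam * c s * (cell 1 1 s - E * mu_mass s - M s * ell_mass s + E * M s * grp_mass s)" for s
  define var_term where "var_term s =
      (c s)\<^sup>2 * (mu_mass s - 2 * M s * mu_mass s + (M s)\<^sup>2 * grp_mass s)" for s
  have "P.expectation (\<lambda>x. (influence lam k0 k1 x)\<^sup>2) = (\<Sum>e\<in>{0,1}. \<Sum>u\<in>{0,1}. \<Sum>t\<in>{0,1::nat}.
      (lam * (e - E) + (if t = 0 then c 0 * (u - M 0) else 0)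
        + (if t = 1 then c 1 * (u - M 1) else 0))\<^sup>2 * cell e u t)"
    by (rule integral_by_cells) (simp add: influence_by_cells E_def M_def c_def)
  also have "\<dots> = lam\<^sup>2 * (E - 2 * E\<^sup>2 + E\<^sup>2 * (grp_mass 0 + grp_mass 1))
      + cov_term 0 + cov_term 1 + var_term 0 + var_term 1"
    by (simp add: cov_term_def var_term_def cells_by_masses E_def power2_eq_square algebra_simps)
  also have "\<dots> = lam\<^sup>2 * (E - E\<^sup>2) + cov_term 0 + cov_term 1 + var_term 0 + var_term 1"
    using grp_mass_sum by simp
  finally have by_terms: "P.expectation (\<lambda>x. (influence lam k0 k1 x)\<^sup>2)
      = lam\<^sup>2 * (E - E\<^sup>2) + cov_term 0 + cov_term 1 + var_term 0 + var_term 1" .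
  have total: "lam\<^sup>2 * (E - E\<^sup>2) = lam\<^sup>2 * (\<Sum>s\<in>{0, 1}. grp_prob P s * cond_var P ell s)
      + lam\<^sup>2 * grp_prob P 0 * grp_prob P 1 * (cond_mean P ell 0 - cond_mean P ell 1)\<^sup>2"
    unfolding E_def expectation_ell[symmetric] total_variance_ell[symmetric]
    by (simp add: algebra_simps)
  have cov: "cov_term s = 2 * lam * (1 - lam) * ((if s = 0 then k0 else k1) * cond_cov P ell mu s)"
    if "s \<in> {0, 1}" for s
    using grp_mass_pos[OF that] that
    by (simp add: cov_term_def cond_cov_ell_mu c_def M_def field_simps)
  have var: "var_term s
      = (1 - lam)\<^sup>2 * ((if s = 0 then k0 else k1)\<^sup>2 * cond_var P mu s / grp_prob P s)"
    if "s \<in> {0, 1}" for s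
    using grp_mass_pos[OF that] that
    by (simp add: var_term_def cond_var_mu grp_prob_eq_grp_mass c_def M_def field_simps
        power2_eq_square)
  show ?thesis
    unfolding by_terms total limit_variance_def
      cov[OF insertI1] cov[OF insertI2[OF singletonI]] var[OF insertI1] var[OF insertI2[OF singletonI]]
    by (simp add: algebra_simps)
qed

abbreviation samples :: "(nat \<Rightarrow> 'z \<times> nat) measure" where
  "samples \<equiv> PiM UNIV (\<lambda>_. P)"

sublocale S: prob_space samples
  by (rule prob_space_PiM) (rule prob)

definition count_deviation :: "nat \<Rightarrow> 'z \<times> nat \<Rightarrow> real" where
  "count_deviation s x = (if snd x = s then 1 else 0) - grp_prob P s"

lemma borel_measurable_deviations[measurable]:
  "grp_deviation s \<in> borel_measurable P" "count_deviation s \<in> borel_measurable P"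
  "influence lam k0 k1 \<in> borel_measurable P"
  unfolding grp_deviation_def count_deviation_def influence_def by measurable

lemma abs_grp_deviation_le_1: "x \<in> space P \<Longrightarrow> \<bar>grp_deviation s x\<bar> \<le> 1"
proof (cases "snd x = s")
  case True
  assume x: "x \<in> space P"
  then have s: "s \<in> {0, 1}"
    using True snd_in_groups[OF x] by simp
  have "0 \<le> cond_mean P mu s" "cond_mean P mu s \<le> 1"
    using grp_mass_pos[OF s] masses_nonneg[of s]
    by (auto simp: cond_mean_mu[OF s] divide_le_eq_1)
  then show ?thesis
    using True mu_01[OF x] by (auto simp: grp_deviation_def)
qed (simp add: grp_deviation_def)

lemma abs_count_deviation_le_1: "s \<in> {0, 1} \<Longrightarrow> \<bar>count_deviation s x\<bar> \<le> 1"
  using pi_pos[of s] P.prob_le_1[of "{x \<in> space P. snd x = s}"]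
  by (auto simp: count_deviation_def grp_prob_def)

lemma expectation_grp_deviation:
  assumes s: "s \<in> {0, 1}"
  shows "P.expectation (grp_deviation s) = 0"
proof -
  define M where "M = mu_mass s / grp_mass s"
  have "P.expectation (grp_deviation s)
      = (\<Sum>e\<in>{0,1}. \<Sum>u\<in>{0,1}. \<Sum>t\<in>{0,1::nat}. (if t = s then u - M else 0) * cell e u t)"
    by (rule integral_by_cells) (simp add: grp_deviation_def cond_mean_mu[OF s] M_def)
  also have "\<dots> = mu_mass s - M * grp_mass s"
    using s by (auto simp: mu_mass_def grp_mass_def algebra_simps)
  also have "\<dots> = 0"
    using grp_mass_pos[OF s] by (simp add: M_def)
  finally show ?thesis .
qed

lemma expectation_count_deviation:
  assumes s: "s \<in> {0, 1}"
  shows "P.expectation (count_deviation s) = 0"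
proof -
  have "P.expectation (count_deviation s)
      = (\<Sum>e\<in>{0,1}. \<Sum>u\<in>{0,1}. \<Sum>t\<in>{0,1::nat}. ((if t = s then 1 else 0) - grp_mass s) * cell e u t)"
    by (rule integral_by_cells) (simp add: count_deviation_def grp_prob_eq_grp_mass[OF s])
  also have "\<dots> = grp_mass s - grp_mass s * (grp_mass 0 + grp_mass 1)"
    using s by (auto simp: grp_mass_def algebra_simps)
  also have "\<dots> = 0"
    using grp_mass_sum by simp
  finally show ?thesis .
qed

lemma prob_abs_sample_sum_ge_le:
  assumes [measurable]: "f \<in> borel_measurable P"
    and bounded: "\<And>x. x \<in> space P \<Longrightarrow> \<bar>f x\<bar> \<le> 1"
    and mean: "P.expectation f = 0" and t: "t > 0"
  shows "S.prob {\<omega> \<in> space samples. t \<le> \<bar>\<Sum>j<n. f (\<omega> j)\<bar>} \<le> real n / t\<^sup>2"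
proof -
  have "\<bar>f (\<omega> j)\<bar> \<le> 1" if "\<omega> \<in> space samples" for \<omega> j
    using that by (intro bounded) (auto simp: space_PiM)
  then show ?thesis
    using S.prob_abs_sum_ge_le[OF P.indep_vars_PiM_coordinates[of UNIV f borel], of 1 t n] t
    by (simp add: P.integral_PiM_coordinate mean)
qed

lemma prob_large_count_deviation:
  assumes "s \<in> {0, 1}" "n > 0" "d > 0"
  shows "S.prob {\<omega> \<in> space samples. real n * d \<le> \<bar>\<Sum>j<n. count_deviation s (\<omega> j)\<bar>}
    \<le> 1 / (real n * d\<^sup>2)"
  using prob_abs_sample_sum_ge_le[of "count_deviation s" "real n * d" n] assms
  by (simp add: abs_count_deviation_le_1 expectation_count_deviation power2_eq_square mult_ac)

lemma prob_large_grp_deviation: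
  assumes "s \<in> {0, 1}" "n > 0" "K > 0"
  shows "S.prob {\<omega> \<in> space samples. sqrt (real n) * K \<le> \<bar>\<Sum>j<n. grp_deviation s (\<omega> j)\<bar>}
    \<le> 1 / K\<^sup>2"
  using prob_abs_sample_sum_ge_le[of "grp_deviation s" "sqrt (real n) * K" n] assms
  by (simp add: abs_grp_deviation_le_1 expectation_grp_deviation power_mult_distrib)

definition risk_error :: "real \<Rightarrow> (real \<times> real \<Rightarrow> real) \<Rightarrow> nat \<Rightarrow> (nat \<Rightarrow> 'z \<times> nat) \<Rightarrow> real" where
  "risk_error lam phi m D = sqrt (real m) *
     ((lam * samp_mean m ell D + (1 - lam) * phi (samp_grp_mean m mu D 0, samp_grp_mean m mu D 1))
      - (lam * P.expectation ell + (1 - lam) * phi (cond_mean P mu 0, cond_mean P mu 1)))"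

definition linear_part :: "real \<Rightarrow> real \<Rightarrow> real \<Rightarrow> nat \<Rightarrow> (nat \<Rightarrow> 'z \<times> nat) \<Rightarrow> real" where
  "linear_part lam k0 k1 n D = (\<Sum>j<n. influence lam k0 k1 (D j)) / sqrt (real n)"

definition remainder ::
    "(real \<times> real \<Rightarrow> real) \<Rightarrow> real \<Rightarrow> real \<Rightarrow> nat \<Rightarrow> (nat \<Rightarrow> 'z \<times> nat) \<Rightarrow> real" where
  "remainder phi k0 k1 n D =
     sqrt (real n) * (phi (samp_grp_mean n mu D 0, samp_grp_mean n mu D 1)
       - phi (cond_mean P mu 0, cond_mean P mu 1))
     - (k0 * (\<Sum>j<n. grp_deviation 0 (D j)) / grp_prob P 0
        + k1 * (\<Sum>j<n. grp_deviation 1 (D j)) / grp_prob P 1) / sqrt (real n)"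

lemma risk_error_decomposition:
  "risk_error lam phi n D = linear_part lam k0 k1 n D + (1 - lam) * remainder phi k0 k1 n D"
proof (cases "n = 0")
  case False
  define r where "r = sqrt (real n)"
  have r: "r > 0" "real n = r * r"
    using False by (simp_all add: r_def)
  define E where "E = P.expectation ell"
  define L where "L = (\<Sum>j<n. ell (D j))"
  define C where "C = k0 * (\<Sum>j<n. grp_deviation 0 (D j)) / grp_prob P 0
      + k1 * (\<Sum>j<n. grp_deviation 1 (D j)) / grp_prob P 1"
  define \<Delta> where "\<Delta> = phi (samp_grp_mean n mu D 0, samp_grp_mean n mu D 1)
      - phi (cond_mean P mu 0, cond_mean P mu 1)"
  have risk: "risk_error lam phi n D = r * (lam * (L / real n - E) + (1 - lam) * \<Delta>)"
    unfolding risk_error_def samp_mean_def L_def E_def \<Delta>_def r_def by (simp add: algebra_simps)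
  have linear: "linear_part lam k0 k1 n D = (lam * (L - real n * E) + (1 - lam) * C) / r"
    unfolding linear_part_def influence_def L_def E_def C_def r_def
    by (simp add: sum.distrib sum_subtractf sum_distrib_left sum_divide_distrib[symmetric]
        algebra_simps)
  have rem: "remainder phi k0 k1 n D = r * \<Delta> - C / r"
    unfolding remainder_def \<Delta>_def C_def r_def ..
  show ?thesis
    unfolding risk linear rem r(2) using r(1) by (simp add: field_simps)
qed (simp add: risk_error_def linear_part_def remainder_def)

text \<open>The penalty phi is not assumed measurable: measurability comes from the group means taking
  only finitely many values.\<close>

lemma measurable_phi_samp_grp_mean:
  fixes phi :: "real \<times> real \<Rightarrow> real"
  assumes "{..<m} \<subseteq> I"
  shows "(\<lambda>D. phi (samp_grp_mean m mu D 0, samp_grp_mean m mu D 1))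
    \<in> borel_measurable (PiM I (\<lambda>_. P))"
proof -
  have [measurable]: "j < m \<Longrightarrow> (\<lambda>D. D j) \<in> measurable (PiM I (\<lambda>_. P)) P" for j
    using assms by (intro measurable_component_singleton) auto
  have [measurable]: "(\<lambda>D. samp_grp_mean m mu D s) \<in> borel_measurable (PiM I (\<lambda>_. P))" for s
    unfolding samp_grp_mean_eq_sums by measurable
  define Q where "Q = (\<lambda>(a, b). real a / real b) ` ({..m} \<times> {..m})"
  have "samp_grp_mean m mu D s \<in> Q" if "D \<in> space (PiM I (\<lambda>_. P))" for D s
    unfolding Q_def
    by (rule samp_grp_mean_in_ratios, rule mu_01) (use that assms in \<open>auto simp: space_PiM\<close>)
  then have "(\<lambda>D. (samp_grp_mean m mu D 0, samp_grp_mean m mu D 1)) ` space (PiM I (\<lambda>_. P))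
      \<subseteq> Q \<times> Q"
    by auto
  moreover have "(\<lambda>D. (samp_grp_mean m mu D 0, samp_grp_mean m mu D 1))
      \<in> borel_measurable (PiM I (\<lambda>_. P))"
    by measurable
  ultimately show ?thesis
    by (intro measurable_comp_finite_range[where g = phi]) (auto simp: Q_def)
qed

lemma measurable_risk_error:
  assumes "{..<m} \<subseteq> I"
  shows "risk_error lam phi m \<in> borel_measurable (PiM I (\<lambda>_. P))"
proof -
  have [measurable]: "j < m \<Longrightarrow> (\<lambda>D. D j) \<in> measurable (PiM I (\<lambda>_. P)) P" for j
    using assms by (intro measurable_component_singleton) auto
  show ?thesis
    using measurable_phi_samp_grp_mean[OF assms, of phi]
    unfolding risk_error_def samp_mean_def by measurable
qed

lemma measurable_remainder[measurable]: "remainder phi k0 k1 n \<in> borel_measurable samples"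
  using measurable_phi_samp_grp_mean[of n UNIV phi] unfolding remainder_def by measurable

lemma measurable_linear_part[measurable]: "linear_part lam k0 k1 n \<in> borel_measurable samples"
  unfolding linear_part_def by measurable

lemma samp_grp_mean_eq_deviation:
  assumes "(\<Sum>j<n. if snd (D j) = s then 1 else 0 :: real) > 0"
  shows "samp_grp_mean n mu D s
    = cond_mean P mu s + (\<Sum>j<n. grp_deviation s (D j)) / (\<Sum>j<n. if snd (D j) = s then 1 else 0)"
proof -
  have "(\<Sum>j<n. grp_deviation s (D j)) = (\<Sum>j<n. if snd (D j) = s then mu (D j) else 0)
      - cond_mean P mu s * (\<Sum>j<n. if snd (D j) = s then 1 else 0)"
    by (induct n) (auto simp: grp_deviation_def algebra_simps)
  then show ?thesis
    using assms unfolding samp_grp_mean_eq_sums by (simp add: field_simps)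
qed

lemma sum_count_deviation:
  "(\<Sum>j<n. count_deviation s (D j)) = (\<Sum>j<n. if snd (D j) = s then 1 else 0) - real n * grp_prob P s"
  by (induct n) (auto simp: count_deviation_def algebra_simps)

lemma remainder_bound_on_good_event:
  assumes n: "n > 0" and K: "K > 0"
    and d: "d > 0" "d \<le> grp_prob P 0 / 2" "d \<le> grp_prob P 1 / 2"
    and counts: "\<And>s. s \<in> {0, 1} \<Longrightarrow> \<bar>\<Sum>j<n. count_deviation s (D j)\<bar> < real n * d"
    and sums: "\<And>s. s \<in> {0, 1} \<Longrightarrow> \<bar>\<Sum>j<n. grp_deviation s (D j)\<bar> < sqrt (real n) * K"
    and deriv: "\<And>y. norm (y - (cond_mean P mu 0, cond_mean P mu 1)) < \<delta> \<Longrightarrow>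
        \<bar>phi y - phi (cond_mean P mu 0, cond_mean P mu 1)
          - (k0 * (fst y - cond_mean P mu 0) + k1 * (snd y - cond_mean P mu 1))\<bar>
        \<le> \<eta> * norm (y - (cond_mean P mu 0, cond_mean P mu 1))"
    and \<eta>: "\<eta> \<ge> 0"
    and small: "2 * K / (sqrt (real n) * grp_prob P 0) + 2 * K / (sqrt (real n) * grp_prob P 1) < \<delta>"
  shows "\<bar>remainder phi k0 k1 n D\<bar> \<le> \<eta> * (2 * K / grp_prob P 0 + 2 * K / grp_prob P 1)
      + \<bar>k0\<bar> * (2 * K * d / (grp_prob P 0)\<^sup>2) + \<bar>k1\<bar> * (2 * K * d / (grp_prob P 1)\<^sup>2)"
proof -
  define c where "c s = (\<Sum>j<n. if snd (D j) = s then 1 else 0 :: real)" for s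
  have p: "grp_prob P s > 0" if "s \<in> {0, 1}" for s
    using pi_pos that by auto
  have nr: "real n > 0"
    using n by simp
  have c: "\<bar>c s - real n * grp_prob P s\<bar> < real n * d" if "s \<in> {0, 1}" for s
    using counts[OF that] unfolding sum_count_deviation c_def .
  have "c s > 0" if s: "s \<in> {0, 1}" for s
  proof -
    have "real n * d \<le> real n * (grp_prob P s / 2)"
      using d s nr by (intro mult_left_mono) auto
    moreover have "real n * grp_prob P s > 0"
      using nr p[OF s] by simp
    ultimately show ?thesis
      using c[OF s] by (auto simp: abs_less_iff)
  qed
  then have mean: "samp_grp_mean n mu D s = cond_mean P mu s + (\<Sum>j<n. grp_deviation s (D j)) / c s"
    if "s \<in> {0, 1}" for s
    unfolding c_def using that by (intro samp_grp_mean_eq_deviation) (auto simp: c_def)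
  have zero: "0 \<in> {0, 1 :: nat}" and one: "1 \<in> {0, 1 :: nat}"
    by simp_all
  show ?thesis
    unfolding remainder_def mean[OF zero] mean[OF one]
    by (rule linearization_remainder_bound[OF p[OF zero] p[OF one] nr K d c[OF zero] c[OF one]
          sums[OF zero] sums[OF one] deriv \<eta> small])
qed

lemma prob_large_remainder_le:
  assumes n: "n > 0" and K: "K > 0"
    and d: "d > 0" "d \<le> grp_prob P 0 / 2" "d \<le> grp_prob P 1 / 2"
    and deriv: "\<And>y. norm (y - (cond_mean P mu 0, cond_mean P mu 1)) < \<delta> \<Longrightarrow>
        \<bar>phi y - phi (cond_mean P mu 0, cond_mean P mu 1)
          - (k0 * (fst y - cond_mean P mu 0) + k1 * (snd y - cond_mean P mu 1))\<bar>
        \<le> \<eta> * norm (y - (cond_mean P mu 0, cond_mean P mu 1))"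
    and \<eta>: "\<eta> \<ge> 0"
    and small: "2 * K / (sqrt (real n) * grp_prob P 0) + 2 * K / (sqrt (real n) * grp_prob P 1) < \<delta>"
    and bound: "\<eta> * (2 * K / grp_prob P 0 + 2 * K / grp_prob P 1)
      + \<bar>k0\<bar> * (2 * K * d / (grp_prob P 0)\<^sup>2) + \<bar>k1\<bar> * (2 * K * d / (grp_prob P 1)\<^sup>2) \<le> \<epsilon>"
  shows "S.prob {\<omega> \<in> space samples. \<epsilon> < \<bar>remainder phi k0 k1 n \<omega>\<bar>}
    \<le> 2 / (real n * d\<^sup>2) + 2 / K\<^sup>2"
proof -
  define U where "U s = {\<omega> \<in> space samples. real n * d \<le> \<bar>\<Sum>j<n. count_deviation s (\<omega> j)\<bar>}" for s
  define V where "V s = {\<omega> \<in> space samples. sqrt (real n) * K \<le> \<bar>\<Sum>j<n. grp_deviation s (\<omega> j)\<bar>}"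
    for s
  have U: "U s \<in> sets samples" and V: "V s \<in> sets samples" for s
    unfolding U_def V_def by measurable
  have "{\<omega> \<in> space samples. \<epsilon> < \<bar>remainder phi k0 k1 n \<omega>\<bar>} \<subseteq> U 0 \<union> U 1 \<union> V 0 \<union> V 1"
  proof (rule subsetI, rule ccontr)
    fix \<omega> assume \<omega>: "\<omega> \<in> {\<omega> \<in> space samples. \<epsilon> < \<bar>remainder phi k0 k1 n \<omega>\<bar>}"
      and good: "\<omega> \<notin> U 0 \<union> U 1 \<union> V 0 \<union> V 1"
    have "\<bar>remainder phi k0 k1 n \<omega>\<bar> \<le> \<epsilon>"
      using good \<omega> bound
      by (intro order_trans[OF remainder_bound_on_good_event[OF n K d _ _ deriv \<eta> small]])
        (auto simp: U_def V_def)
    then show False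
      using \<omega> by simp
  qed
  then have "S.prob {\<omega> \<in> space samples. \<epsilon> < \<bar>remainder phi k0 k1 n \<omega>\<bar>}
      \<le> S.prob (U 0 \<union> U 1 \<union> V 0 \<union> V 1)"
    using U V by (intro S.finite_measure_mono) auto
  also have "\<dots> \<le> S.prob (U 0) + S.prob (U 1) + S.prob (V 0) + S.prob (V 1)"
    using measure_Un_le[OF sets.Un[OF sets.Un[OF U[of 0] U[of 1]] V[of 0]] V[of 1]]
      measure_Un_le[OF sets.Un[OF U[of 0] U[of 1]] V[of 0]] measure_Un_le[OF U[of 0] U[of 1]]
    by linarith
  also have "\<dots> \<le> 1 / (real n * d\<^sup>2) + 1 / (real n * d\<^sup>2) + 1 / K\<^sup>2 + 1 / K\<^sup>2"
    unfolding U_def V_def using n d K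
    by (intro add_mono prob_large_count_deviation prob_large_grp_deviation) auto
  finally show ?thesis
    by simp
qed

lemma remainder_prob_eventually_le:
  fixes phi :: "real \<times> real \<Rightarrow> real"
  assumes grad: "(phi has_derivative (\<lambda>(h0, h1). k0 * h0 + k1 * h1))
      (at (cond_mean P mu 0, cond_mean P mu 1))"
    and \<epsilon>: "\<epsilon> > 0" and K: "K > 0"
  obtains d where "d > 0" "\<forall>\<^sub>F n in sequentially.
    S.prob {\<omega> \<in> space samples. \<epsilon> < \<bar>remainder phi k0 k1 n \<omega>\<bar>} \<le> 2 / (real n * d\<^sup>2) + 2 / K\<^sup>2"
proof -
  define p0 where "p0 = grp_prob P 0"
  define p1 where "p1 = grp_prob P 1"
  have p: "p0 > 0" "p1 > 0"
    using pi_pos by (auto simp: p0_def p1_def)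
  define B where "B = 2 * K / p0 + 2 * K / p1"
  have B: "B > 0"
    using K p by (auto simp: B_def intro!: add_pos_pos divide_pos_pos)
  define \<eta> where "\<eta> = \<epsilon> / (2 * B)"
  have \<eta>: "\<eta> > 0"
    using \<epsilon> B by (simp add: \<eta>_def)
  define C where "C = \<bar>k0\<bar> * (2 * K / p0\<^sup>2) + \<bar>k1\<bar> * (2 * K / p1\<^sup>2) + 1"
  have C: "C > 0"
    using K p by (simp add: C_def add_nonneg_pos)
  define d where "d = min (min (p0 / 2) (p1 / 2)) (\<epsilon> / (2 * C))"
  have d: "d > 0" "d \<le> p0 / 2" "d \<le> p1 / 2"
    using p \<epsilon> C by (auto simp: d_def)
  have "\<bar>k0\<bar> * (2 * K * d / p0\<^sup>2) + \<bar>k1\<bar> * (2 * K * d / p1\<^sup>2) \<le> d * C"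
    using d by (simp add: C_def algebra_simps)
  also have "\<dots> \<le> \<epsilon> / 2"
    using C by (simp add: d_def min_def field_simps)
  finally have bound: "\<eta> * B + \<bar>k0\<bar> * (2 * K * d / p0\<^sup>2) + \<bar>k1\<bar> * (2 * K * d / p1\<^sup>2) \<le> \<epsilon>"
    using B by (simp add: \<eta>_def)
  obtain \<delta> where \<delta>: "\<delta> > 0" and deriv: "\<And>y. norm (y - (cond_mean P mu 0, cond_mean P mu 1)) < \<delta> \<Longrightarrow>
      \<bar>phi y - phi (cond_mean P mu 0, cond_mean P mu 1)
        - (k0 * (fst y - cond_mean P mu 0) + k1 * (snd y - cond_mean P mu 1))\<bar>
      \<le> \<eta> * norm (y - (cond_mean P mu 0, cond_mean P mu 1))"
    using has_derivative_linear_approx[OF grad \<eta>] by blast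
  have "(\<lambda>n. B / sqrt (real n)) \<longlonglongrightarrow> 0"
    by (intro tendsto_divide_0[OF tendsto_const] filterlim_at_top_imp_at_infinity
        filterlim_compose[OF sqrt_at_top filterlim_real_sequentially])
  then have "\<forall>\<^sub>F n in sequentially. n > 0 \<and> B / sqrt (real n) < \<delta>"
    using eventually_gt_at_top[of 0] order_tendstoD(2)[OF _ \<delta>] by (intro eventually_conj)
  then have "\<forall>\<^sub>F n in sequentially.
      S.prob {\<omega> \<in> space samples. \<epsilon> < \<bar>remainder phi k0 k1 n \<omega>\<bar>} \<le> 2 / (real n * d\<^sup>2) + 2 / K\<^sup>2"
  proof eventually_elim
    case (elim n)
    have "2 * K / (sqrt (real n) * p0) + 2 * K / (sqrt (real n) * p1) = B / sqrt (real n)"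
      by (simp add: B_def add_divide_distrib mult.commute)
    then show ?case
      using elim \<eta> bound
      by (intro prob_large_remainder_le[OF _ K d[unfolded p0_def p1_def] deriv])
        (auto simp: p0_def p1_def B_def)
  qed
  with d(1) show ?thesis
    using that by blast
qed

lemma remainder_tendsto_zero_in_prob:
  fixes phi :: "real \<times> real \<Rightarrow> real"
  assumes grad: "(phi has_derivative (\<lambda>(h0, h1). k0 * h0 + k1 * h1))
      (at (cond_mean P mu 0, cond_mean P mu 1))"
  shows "S.tendsto_zero_in_prob (remainder phi k0 k1)"
  unfolding S.tendsto_zero_in_prob_def
proof (intro allI impI order_tendstoI)
  fix \<epsilon> r :: real
  assume \<epsilon>: "\<epsilon> > 0" and r: "r > 0"
  define K where "K = 3 / sqrt r"
  have K: "K > 0" "2 / K\<^sup>2 < r / 2"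
    using r by (auto simp: K_def power_divide)
  obtain d where d: "d > 0" and prob_le: "\<forall>\<^sub>F n in sequentially.
      S.prob {\<omega> \<in> space samples. \<epsilon> < \<bar>remainder phi k0 k1 n \<omega>\<bar>} \<le> 2 / (real n * d\<^sup>2) + 2 / K\<^sup>2"
    using remainder_prob_eventually_le[OF grad \<epsilon> K(1)] by blast
  have "(\<lambda>n. 2 / d\<^sup>2 / real n) \<longlonglongrightarrow> 0"
    by (intro tendsto_divide_0[OF tendsto_const] filterlim_at_top_imp_at_infinity
        filterlim_real_sequentially)
  from order_tendstoD(2)[OF this half_gt_zero[OF r]] prob_le
  show "\<forall>\<^sub>F n in sequentially. S.prob {\<omega> \<in> space samples. \<epsilon> < \<bar>remainder phi k0 k1 n \<omega>\<bar>} < r"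
  proof eventually_elim
    case (elim n)
    then show ?case
      using K(2) by (simp add: divide_divide_eq_left mult.commute)
  qed
qed (auto intro!: always_eventually intro: less_le_trans[OF _ measure_nonneg])

lemma abs_influence_le:
  assumes x: "x \<in> space P"
  shows "\<bar>influence lam k0 k1 x\<bar> \<le> \<bar>lam\<bar> + \<bar>1 - lam\<bar> * (\<bar>k0\<bar> / grp_prob P 0 + \<bar>k1\<bar> / grp_prob P 1)"
proof -
  have "0 \<le> P.expectation ell" "P.expectation ell \<le> 1"
    using masses_nonneg[of 0] masses_nonneg[of 1] grp_mass_sum
    by (auto simp: expectation_ell ell_mass_def)
  then have ell: "\<bar>ell x - P.expectation ell\<bar> \<le> 1"
    using ell_01[OF x] by auto
  have grp: "\<bar>k * grp_deviation s x / grp_prob P s\<bar> \<le> \<bar>k\<bar> / grp_prob P s" if "s \<in> {0, 1}" for k s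
  proof -
    have "\<bar>k * grp_deviation s x\<bar> \<le> \<bar>k\<bar>"
      using abs_grp_deviation_le_1[OF x, of s] by (simp add: abs_mult mult_left_le)
    then show ?thesis
      using pi_pos[OF that] by (simp add: divide_right_mono)
  qed
  have "\<bar>influence lam k0 k1 x\<bar> \<le> \<bar>lam * (ell x - P.expectation ell)\<bar>
      + \<bar>(1 - lam) * (k0 * grp_deviation 0 x / grp_prob P 0 + k1 * grp_deviation 1 x / grp_prob P 1)\<bar>"
    unfolding influence_def by (rule abs_triangle_ineq)
  also have "\<dots> \<le> \<bar>lam\<bar> * \<bar>ell x - P.expectation ell\<bar>
      + \<bar>1 - lam\<bar> * (\<bar>k0 * grp_deviation 0 x / grp_prob P 0\<bar> + \<bar>k1 * grp_deviation 1 x / grp_prob P 1\<bar>)"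
    unfolding abs_mult by (intro add_mono order_refl mult_left_mono abs_triangle_ineq abs_ge_zero)
  also have "\<dots> \<le> \<bar>lam\<bar> * 1 + \<bar>1 - lam\<bar> * (\<bar>k0\<bar> / grp_prob P 0 + \<bar>k1\<bar> / grp_prob P 1)"
    using ell grp[of 0 k0] grp[of 1 k1] by (intro add_mono mult_left_mono) auto
  finally show ?thesis
    by simp
qed

lemma linear_part_weak_conv:
  "weak_conv_m (\<lambda>n. distr samples borel (linear_part lam k0 k1 n)) (normal0 (limit_variance lam k0 k1))"
  unfolding linear_part_def
proof (rule S.weak_conv_normal0_sum)
  note influence = borel_measurable_deviations(3)[of lam k0 k1]
  have square[measurable]: "(\<lambda>x. (influence lam k0 k1 x)\<^sup>2) \<in> borel_measurable P"
    by measurable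
  show "S.indep_vars (\<lambda>_. borel) (\<lambda>i \<omega>. influence lam k0 k1 (\<omega> i)) UNIV"
    by (rule P.indep_vars_PiM_coordinates[OF UNIV_not_empty influence])
  show "S.expectation (\<lambda>\<omega>. influence lam k0 k1 (\<omega> i)) = 0" for i
    unfolding P.integral_PiM_coordinate[OF UNIV_I influence] by (rule expectation_influence)
  show "S.expectation (\<lambda>\<omega>. (influence lam k0 k1 (\<omega> i))\<^sup>2) = limit_variance lam k0 k1" for i
    unfolding P.integral_PiM_coordinate[OF UNIV_I square] by (rule expectation_influence_square)
  show "distr samples borel (\<lambda>\<omega>. influence lam k0 k1 (\<omega> i)) = distr P borel (influence lam k0 k1)"
    for i by (rule P.distr_PiM_coordinate[OF UNIV_I influence])
  define C where "C = \<bar>lam\<bar> + \<bar>1 - lam\<bar> * (\<bar>k0\<bar> / grp_prob P 0 + \<bar>k1\<bar> / grp_prob P 1)"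
  have "(influence lam k0 k1 (\<omega> i))\<^sup>2 \<le> C\<^sup>2" if "\<omega> \<in> space samples" for \<omega> i
  proof -
    have bound: "\<bar>influence lam k0 k1 (\<omega> i)\<bar> \<le> C"
      unfolding C_def using that by (intro abs_influence_le) (auto simp: space_PiM)
    then show ?thesis
      using power_mono[OF bound abs_ge_zero, of 2] by simp
  qed
  then show "integrable samples (\<lambda>\<omega>. (influence lam k0 k1 (\<omega> i))\<^sup>2)" for i
    by (intro S.integrable_const_bound[where B = "C\<^sup>2"] AE_I2) auto
qed

lemma risk_error_restrict: "risk_error lam phi m (restrict D {..<m}) = risk_error lam phi m D"
  unfolding risk_error_def samp_mean_restrict samp_grp_mean_restrict ..

lemma weak_conv_risk_error:
  fixes phi :: "real \<times> real \<Rightarrow> real"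
  assumes grad: "(phi has_derivative (\<lambda>(h0, h1). k0 * h0 + k1 * h1))
      (at (cond_mean P mu 0, cond_mean P mu 1))"
  shows "weak_conv_m (\<lambda>m. distr (PiM {..<m} (\<lambda>_. P)) borel (risk_error lam phi m))
    (normal0 (limit_variance lam k0 k1))"
proof -
  have "distr (PiM {..<m} (\<lambda>_. P)) borel (risk_error lam phi m)
      = distr samples borel (risk_error lam phi m)" for m
    by (rule P.distr_PiM_finite_prefix) (simp_all add: measurable_risk_error risk_error_restrict)
  moreover have "limit_variance lam k0 k1 \<ge> 0"
    by (simp flip: expectation_influence_square)
  then have "weak_conv_m (\<lambda>m. distr samples borel (risk_error lam phi m))
      (normal0 (limit_variance lam k0 k1))"
  proof (rule S.weak_conv_m_perturb[OF measurable_linear_part _ linear_part_weak_conv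
        real_distribution_normal0, rotated])
    show "S.tendsto_zero_in_prob (\<lambda>n \<omega>. risk_error lam phi n \<omega> - linear_part lam k0 k1 n \<omega>)"
      using S.tendsto_zero_in_prob_cmult[OF remainder_tendsto_zero_in_prob[OF grad], of "1 - lam"]
      by (simp add: risk_error_decomposition[of lam phi _ _ k0 k1])
  qed (simp add: measurable_risk_error)
  ultimately show ?thesis
    by simp
qed

end

theorem theorem1:
  fixes Mz :: "'z measure"
    and P :: "('z \<times> nat) measure"
    and ell mu :: "'z \<times> nat \<Rightarrow> real"
    and lam :: real
    and phi :: "real \<times> real \<Rightarrow> real"
    and k0 k1 :: real
  assumes prob: "prob_space P"
    and sets_P: "sets P = sets (Mz \<Otimes>\<^sub>M count_space {0, 1})"
    and pi_pos: "\<And>s. s \<in> {0, 1} \<Longrightarrow> grp_prob P s > 0"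
    and ell_meas: "ell \<in> borel_measurable P"
    and mu_meas: "mu \<in> borel_measurable P"
    and ell_01: "\<And>x. x \<in> space P \<Longrightarrow> ell x \<in> {0, 1}"
    and mu_01: "\<And>x. x \<in> space P \<Longrightarrow> mu x \<in> {0, 1}"
    and lam_range: "0 \<le> lam" "lam \<le> 1"
    and phi_nonneg: "\<And>x. phi x \<ge> 0"
    and phi_grad: "(phi has_derivative (\<lambda>(h0, h1). k0 * h0 + k1 * h1))
                     (at (cond_mean P mu 0, cond_mean P mu 1))"
  shows "weak_conv_m
     (\<lambda>m. distr (PiM {..<m} (\<lambda>_. P)) borel
        (\<lambda>D. sqrt (real m) *
           ((lam * samp_mean m ell D
             + (1 - lam) * phi (samp_grp_mean m mu D 0, samp_grp_mean m mu D 1))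
          - (lam * prob_space.expectation P ell
             + (1 - lam) * phi (cond_mean P mu 0, cond_mean P mu 1)))))
     (normal0
       (lam\<^sup>2 * (\<Sum>s\<in>{0, 1}. grp_prob P s * cond_var P ell s)
        + lam\<^sup>2 * grp_prob P 0 * grp_prob P 1 * (cond_mean P ell 0 - cond_mean P ell 1)\<^sup>2
        + (1 - lam)\<^sup>2 * (k0\<^sup>2 * cond_var P mu 0 / grp_prob P 0
                         + k1\<^sup>2 * cond_var P mu 1 / grp_prob P 1)
        + 2 * lam * (1 - lam) * (k0 * cond_cov P ell mu 0 + k1 * cond_cov P ell mu 1)))"
proof -
  interpret group_risk_model Mz P ell mu
    by (rule group_risk_model.intro) (fact prob sets_P pi_pos ell_meas mu_meas ell_01 mu_01)+
  show ?thesis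
    using weak_conv_risk_error[OF phi_grad, of lam]
    unfolding risk_error_def limit_variance_def .
qed

end
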